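(* Let $V$ be a unitary irreducible lowest weight representation of $\hat{G}_{\Lambda,\Lambda_F}$ with lowest weight $h$. If $\dot I,\dot J$ are sequences and $\lambda_1,\lambda_2\in\{1,\dots,\Lambda_F\}$ satisfy $\dot I\lambda_1>\dot J\lambda_2$, then $h_{II}(\lambda_2;\dot J)-h_{II}(\lambda_1;\dot I)\ge0$ and $h_{III}(\dot J;\lambda_2)-h_{III}(\dot I;\lambda_1)\ge0$.
   Context: Fix positive integers $\Lambda,\Lambda_F$. A sequence $\dot I=i_1\cdots i_a$ is a finite, possibly empty, sequence of integers in $\{1,\dots,\Lambda\}$; $\#(\dot I)=a$, juxtaposition denotes concatenation, and $\delta^{\dot I}_{\dot J}$ is $1$ if $\dot I=\dot J$ and $0$ otherwise (similarly for integers). Let $\mathcal{T}_o$ be the complex vector space with basis the symbols $\bar\phi^{\lambda_1}\otimes s^{\dot K}\otimes\phi^{\lambda_2}$, $1\le\lambda_1,\lambda_2\le\Lambda_F$, $\dot K$ any sequence. For all sequences $\dot I,\dot J$ and all $\lambda_i\in\{1,\dots,\Lambda_F\}$ define linear operators on $\mathcal{T}_o$: first kind: $\bar\Xi^{\lambda_1}_{\lambda_2}\otimes f^{\dot I}_{\dot J}\otimes\Xi^{\lambda_3}_{\lambda_4}(\bar\phi^{\lambda_5}\otimes s^{\dot K}\otimes\phi^{\lambda_6})=\delta^{\lambda_5}_{\lambda_2}\delta^{\dot K}_{\dot J}\delta^{\lambda_6}_{\lambda_4}\,\bar\phi^{\lambda_1}\otimes s^{\dot I}\otimes\phi^{\lambda_3}$;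 second kind: $\bar\Xi^{\lambda_1}_{\lambda_2}\otimes l^{\dot I}_{\dot J}(\bar\phi^{\lambda_3}\otimes s^{\dot K}\otimes\phi^{\lambda_4})=\delta^{\lambda_3}_{\lambda_2}\sum_{\dot K_1\dot K_2=\dot K}\delta^{\dot K_1}_{\dot J}\,\bar\phi^{\lambda_1}\otimes s^{\dot I\dot K_2}\otimes\phi^{\lambda_4}$; third kind: $r^{\dot I}_{\dot J}\otimes\Xi^{\lambda_1}_{\lambda_2}(\bar\phi^{\lambda_3}\otimes s^{\dot K}\otimes\phi^{\lambda_4})=\delta^{\lambda_4}_{\lambda_2}\sum_{\dot K_1\dot K_2=\dot K}\delta^{\dot K_2}_{\dot J}\,\bar\phi^{\lambda_3}\otimes s^{\dot K_1\dot I}\otimes\phi^{\lambda_1}$; fourth kind: $\sigma^{\dot I}_{\dot J}(\bar\phi^{\lambda_1}\otimes s^{\dot K}\otimes\phi^{\lambda_2})=\sum_{\dot K_1\dot K_2\dot K_3=\dot K}\delta^{\dot K_2}_{\dot J}\,\bar\phi^{\lambda_1}\otimes s^{\dot K_1\dot I\dot K_3}\otimes\phi^{\lambda_2}$; sums over all ways to write $\dot K$ as a concatenation of possibly empty sequences. The open string algebra $\hat{G}_{\Lambda,\Lambda_F}$ is the Lie algebra (commutator bracket) of operators on $\mathcal{T}_o$ spanned by these operators. Ordering: for finite sequences of positive integers $a=a_1\cdots a_m$, $b=b_1\cdots b_n$, $a>b$ means $m>n$, or $m=n\ne0$ and $a_r>b_r$ at the first index $r$ where they differ (applied to concatenations like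 $\dot I\lambda_1$). $G^{00}$ is the span of all $\bar\Xi^{\lambda_1}_{\lambda_1}\otimes f^{\dot I}_{\dot I}\otimes\Xi^{\lambda_2}_{\lambda_2}$, $\bar\Xi^{\lambda}_{\lambda}\otimes l^{\dot I}_{\dot I}$, $r^{\dot I}_{\dot I}\otimes\Xi^{\lambda}_{\lambda}$, $\sigma^{\dot I}_{\dot I}$. $G^-$ is the span of all operators of the four kinds with $\#(\dot I)<\#(\dot J)$, together with those with $\#(\dot I)=\#(\dot J)$ and $\dot J\lambda_2\lambda_4>\dot I\lambda_1\lambda_3$ (first kind), $\dot J\lambda_2>\dot I\lambda_1$ (second and third kind), $\dot J>\dot I$ (fourth kind). $\omega$ is the antilinear anti-involution swapping upper and lower indices: $\omega(\bar\Xi^{\lambda_1}_{\lambda_2}\otimes f^{\dot I}_{\dot J}\otimes\Xi^{\lambda_3}_{\lambda_4})=\bar\Xi^{\lambda_2}_{\lambda_1}\otimes f^{\dot J}_{\dot I}\otimes\Xi^{\lambda_4}_{\lambda_3}$, $\omega(\bar\Xi^{\lambda_1}_{\lambda_2}\otimes l^{\dot I}_{\dot J})=\bar\Xi^{\lambda_2}_{\lambda_1}\otimes l^{\dot J}_{\dot I}$, $\omega(r^{\dot I}_{\dot J}\otimes\Xi^{\lambda_1}_{\lambda_2})=r^{\dot J}_{\dot I}\otimes\Xi^{\lambda_2}_{\lambda_1}$, $\omega(\sigma^{\dot I}_{\dot J})=\sigma^{\dot J}_{\dot I}$. A lowest weight $h$ is a linear functional on $G^{00}$ real on the spanning operators;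 $h_{II}(\lambda;\dot I)$ and $h_{III}(\dot I;\lambda)$ denote its values on $\bar\Xi^{\lambda}_{\lambda}\otimes l^{\dot I}_{\dot I}$ and $r^{\dot I}_{\dot I}\otimes\Xi^{\lambda}_{\lambda}$. A unitary lowest weight representation with lowest weight $h$ is a representation $V$ generated by a vector $v\ne0$ with $G^-v=0$ and $Hv=h(H)v$ for $H\in G^{00}$, carrying a positive definite Hermitian form with $\langle Xu,w\rangle=\langle u,\omega(X)w\rangle$ for all $X$. *)

theory Defs
  imports Complex_Main "HOL-Library.Function_Algebras"
begin

text \<open>A basis element phibar^a (x) s^K (x) phi^b of T_o is encoded as the triple (a, K, b).
  Vectors of T_o are (finitely supported) functions from basis triples to complex numbers;
  operators are given by their action on basis elements (matrix columns).\<close>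

type_synonym bas = "nat \<times> nat list \<times> nat"
type_synonym vec = "bas \<Rightarrow> complex"
type_synonym op = "bas \<Rightarrow> vec"

definition valid_seq :: "nat \<Rightarrow> nat list \<Rightarrow> bool" where
  "valid_seq Lam K \<longleftrightarrow> (\<forall>k\<in>set K. 1 \<le> k \<and> k \<le> Lam)"

definition valid_lam :: "nat \<Rightarrow> nat \<Rightarrow> bool" where
  "valid_lam LamF l \<longleftrightarrow> 1 \<le> l \<and> l \<le> LamF"

definition valid_bas :: "nat \<Rightarrow> nat \<Rightarrow> bas \<Rightarrow> bool" where
  "valid_bas Lam LamF b \<longleftrightarrow>
     (case b of (a, K, c) \<Rightarrow> valid_lam LamF a \<and> valid_seq Lam K \<and> valid_lam LamF c)"

text \<open>Generators: F l1 l2 I J l3 l4 = Xibar^l1_l2 (x) f^I_J (x) Xi^l3_l4 (first kind);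
  L l1 l2 I J = Xibar^l1_l2 (x) l^I_J (second kind);
  R I J l1 l2 = r^I_J (x) Xi^l1_l2 (third kind);  S I J = sigma^I_J (fourth kind).\<close>

datatype gen =
    F nat nat "nat list" "nat list" nat nat
  | L nat nat "nat list" "nat list"
  | R "nat list" "nat list" nat nat
  | S "nat list" "nat list"

fun valid_gen :: "nat \<Rightarrow> nat \<Rightarrow> gen \<Rightarrow> bool" where
  "valid_gen Lam LamF (F l1 l2 I J l3 l4) \<longleftrightarrow>
     valid_lam LamF l1 \<and> valid_lam LamF l2 \<and> valid_lam LamF l3 \<and> valid_lam LamF l4 \<and>
     valid_seq Lam I \<and> valid_seq Lam J"
| "valid_gen Lam LamF (L l1 l2 I J) \<longleftrightarrow>
     valid_lam LamF l1 \<and> valid_lam LamF l2 \<and> valid_seq Lam I \<and> valid_seq Lam J"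
| "valid_gen Lam LamF (R I J l1 l2) \<longleftrightarrow>
     valid_lam LamF l1 \<and> valid_lam LamF l2 \<and> valid_seq Lam I \<and> valid_seq Lam J"
| "valid_gen Lam LamF (S I J) \<longleftrightarrow> valid_seq Lam I \<and> valid_seq Lam J"

definition ebas :: "bas \<Rightarrow> vec" where
  "ebas b = (\<lambda>c. if c = b then 1 else 0)"

text \<open>Action of a generator on a basis element. Sums range over all ways of writing K as a
  concatenation K1 K2 (resp. K1 K2 K3) of possibly empty sequences.\<close>

fun gen_act_raw :: "gen \<Rightarrow> bas \<Rightarrow> vec" where
  "gen_act_raw (F l1 l2 I J l3 l4) (a, K, b) =
     (if a = l2 \<and> K = J \<and> b = l4 then ebas (l1, I, l3) else 0)"
| "gen_act_raw (L l1 l2 I J) (a, K, b) =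
     (if a = l2 then
        (\<Sum>n\<in>{0..length K}. if take n K = J then ebas (l1, I @ drop n K, b) else 0)
      else 0)"
| "gen_act_raw (R I J l1 l2) (a, K, b) =
     (if b = l2 then
        (\<Sum>n\<in>{0..length K}. if drop n K = J then ebas (a, take n K @ I, l1) else 0)
      else 0)"
| "gen_act_raw (S I J) (a, K, b) =
     (\<Sum>(n, m)\<in>{(n, m). n \<le> m \<and> m \<le> length K}.
        if take (m - n) (drop n K) = J then ebas (a, take n K @ I @ drop m K, b) else 0)"

definition op_of :: "nat \<Rightarrow> nat \<Rightarrow> gen \<Rightarrow> op" where
  "op_of Lam LamF g = (\<lambda>b. if valid_bas Lam LamF b then gen_act_raw g b else 0)"

definition osc :: "complex \<Rightarrow> op \<Rightarrow> op" where
  "osc c A = (\<lambda>b c'. c * A b c')"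

definition apply_op :: "op \<Rightarrow> vec \<Rightarrow> vec" where
  "apply_op A x = (\<Sum>b\<in>{b. x b \<noteq> 0}. (\<lambda>c. x b * A b c))"

definition comp_op :: "op \<Rightarrow> op \<Rightarrow> op" where
  "comp_op A B = (\<lambda>b. apply_op A (B b))"

definition bracket :: "op \<Rightarrow> op \<Rightarrow> op" where
  "bracket A B = comp_op A B - comp_op B A"

definition ospan :: "op set \<Rightarrow> op set" where
  "ospan Gs = {X. \<exists>Fs c. finite Fs \<and> Fs \<subseteq> Gs \<and> X = (\<Sum>s\<in>Fs. osc (c s) s)}"

definition Ghat :: "nat \<Rightarrow> nat \<Rightarrow> op set" where
  "Ghat Lam LamF = ospan (op_of Lam LamF ` {g. valid_gen Lam LamF g})"

definition seq_gt :: "nat list \<Rightarrow> nat list \<Rightarrow> bool" where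
  "seq_gt a b \<longleftrightarrow> length a > length b \<or>
     (length a = length b \<and> length a \<noteq> 0 \<and>
      (\<exists>r < length a. take r a = take r b \<and> a ! r > b ! r))"

fun is_G00_gen :: "gen \<Rightarrow> bool" where
  "is_G00_gen (F l1 l2 I J l3 l4) \<longleftrightarrow> l1 = l2 \<and> I = J \<and> l3 = l4"
| "is_G00_gen (L l1 l2 I J) \<longleftrightarrow> l1 = l2 \<and> I = J"
| "is_G00_gen (R I J l1 l2) \<longleftrightarrow> l1 = l2 \<and> I = J"
| "is_G00_gen (S I J) \<longleftrightarrow> I = J"

fun is_Gminus_gen :: "gen \<Rightarrow> bool" where
  "is_Gminus_gen (F l1 l2 I J l3 l4) \<longleftrightarrow> length I < length J \<or>
     (length I = length J \<and> seq_gt (J @ [l2, l4]) (I @ [l1, l3]))"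
| "is_Gminus_gen (L l1 l2 I J) \<longleftrightarrow> length I < length J \<or>
     (length I = length J \<and> seq_gt (J @ [l2]) (I @ [l1]))"
| "is_Gminus_gen (R I J l1 l2) \<longleftrightarrow> length I < length J \<or>
     (length I = length J \<and> seq_gt (J @ [l2]) (I @ [l1]))"
| "is_Gminus_gen (S I J) \<longleftrightarrow> length I < length J \<or>
     (length I = length J \<and> seq_gt J I)"

definition G00 :: "nat \<Rightarrow> nat \<Rightarrow> op set" where
  "G00 Lam LamF = ospan (op_of Lam LamF ` {g. valid_gen Lam LamF g \<and> is_G00_gen g})"

definition Gminus :: "nat \<Rightarrow> nat \<Rightarrow> op set" where
  "Gminus Lam LamF = ospan (op_of Lam LamF ` {g. valid_gen Lam LamF g \<and> is_Gminus_gen g})"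

fun omega_gen :: "gen \<Rightarrow> gen" where
  "omega_gen (F l1 l2 I J l3 l4) = F l2 l1 J I l4 l3"
| "omega_gen (L l1 l2 I J) = L l2 l1 J I"
| "omega_gen (R I J l1 l2) = R J I l2 l1"
| "omega_gen (S I J) = S J I"

text \<open>The representation space V is modelled as a complex subspace of a function space
  'a => complex (every complex vector space is isomorphic to such a subspace).\<close>

definition fsc :: "complex \<Rightarrow> ('a \<Rightarrow> complex) \<Rightarrow> ('a \<Rightarrow> complex)" where
  "fsc c u = (\<lambda>x. c * u x)"

definition csubspace :: "('a \<Rightarrow> complex) set \<Rightarrow> bool" where
  "csubspace W \<longleftrightarrow> 0 \<in> W \<and> (\<forall>u\<in>W. \<forall>w\<in>W. u + w \<in> W) \<and> (\<forall>c. \<forall>u\<in>W. fsc c u \<in> W)"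

definition is_rep :: "nat \<Rightarrow> nat \<Rightarrow> ('a \<Rightarrow> complex) set \<Rightarrow> (op \<Rightarrow> ('a \<Rightarrow> complex) \<Rightarrow> ('a \<Rightarrow> complex)) \<Rightarrow> bool" where
  "is_rep Lam LamF V \<rho> \<longleftrightarrow>
     csubspace V \<and>
     (\<forall>X\<in>Ghat Lam LamF. \<forall>u\<in>V. \<rho> X u \<in> V) \<and>
     (\<forall>X\<in>Ghat Lam LamF. \<forall>u\<in>V. \<forall>w\<in>V. \<forall>a b.
        \<rho> X (fsc a u + fsc b w) = fsc a (\<rho> X u) + fsc b (\<rho> X w)) \<and>
     (\<forall>X\<in>Ghat Lam LamF. \<forall>Y\<in>Ghat Lam LamF. \<forall>u\<in>V. \<forall>a b.
        \<rho> (osc a X + osc b Y) u = fsc a (\<rho> X u) + fsc b (\<rho> Y u)) \<and>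
     (\<forall>X\<in>Ghat Lam LamF. \<forall>Y\<in>Ghat Lam LamF. \<forall>u\<in>V.
        \<rho> (bracket X Y) u = \<rho> X (\<rho> Y u) - \<rho> Y (\<rho> X u))"

definition invariant_subspace :: "nat \<Rightarrow> nat \<Rightarrow> ('a \<Rightarrow> complex) set \<Rightarrow> (op \<Rightarrow> ('a \<Rightarrow> complex) \<Rightarrow> ('a \<Rightarrow> complex)) \<Rightarrow> ('a \<Rightarrow> complex) set \<Rightarrow> bool" where
  "invariant_subspace Lam LamF V \<rho> W \<longleftrightarrow>
     csubspace W \<and> W \<subseteq> V \<and> (\<forall>X\<in>Ghat Lam LamF. \<forall>u\<in>W. \<rho> X u \<in> W)"

definition irreducible_rep :: "nat \<Rightarrow> nat \<Rightarrow> ('a \<Rightarrow> complex) set \<Rightarrow> (op \<Rightarrow> ('a \<Rightarrow> complex) \<Rightarrow> ('a \<Rightarrow> complex)) \<Rightarrow> bool" where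
  "irreducible_rep Lam LamF V \<rho> \<longleftrightarrow> is_rep Lam LamF V \<rho> \<and> V \<noteq> {0} \<and>
     (\<forall>W. invariant_subspace Lam LamF V \<rho> W \<longrightarrow> W = {0} \<or> W = V)"

definition lowest_weight_rep :: "nat \<Rightarrow> nat \<Rightarrow> ('a \<Rightarrow> complex) set \<Rightarrow> (op \<Rightarrow> ('a \<Rightarrow> complex) \<Rightarrow> ('a \<Rightarrow> complex)) \<Rightarrow> (op \<Rightarrow> complex) \<Rightarrow> ('a \<Rightarrow> complex) \<Rightarrow> bool" where
  "lowest_weight_rep Lam LamF V \<rho> h v \<longleftrightarrow>
     is_rep Lam LamF V \<rho> \<and>
     \<comment> \<open>h is a linear functional on G00, real on the spanning operators\<close>
     (\<forall>X\<in>G00 Lam LamF. \<forall>Y\<in>G00 Lam LamF. \<forall>a b. h (osc a X + osc b Y) = a * h X + b * h Y) \<and>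
     (\<forall>g. valid_gen Lam LamF g \<and> is_G00_gen g \<longrightarrow> h (op_of Lam LamF g) \<in> \<real>) \<and>
     \<comment> \<open>V is generated by v \<noteq> 0\<close>
     v \<in> V \<and> v \<noteq> 0 \<and>
     (\<forall>W. invariant_subspace Lam LamF V \<rho> W \<and> v \<in> W \<longrightarrow> W = V) \<and>
     \<comment> \<open>G^- v = 0 and H v = h(H) v\<close>
     (\<forall>X\<in>Gminus Lam LamF. \<rho> X v = 0) \<and>
     (\<forall>H\<in>G00 Lam LamF. \<rho> H v = fsc (h H) v)"

text \<open>The condition is imposed on the spanning
  operators; by (anti)linearity of both sides in X this is the condition for all X.\<close>

definition unitary_rep :: "nat \<Rightarrow> nat \<Rightarrow> ('a \<Rightarrow> complex) set \<Rightarrow> (op \<Rightarrow> ('a \<Rightarrow> complex) \<Rightarrow> ('a \<Rightarrow> complex)) \<Rightarrow> (('a \<Rightarrow> complex) \<Rightarrow> ('a \<Rightarrow> complex) \<Rightarrow> complex) \<Rightarrow> bool" where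
  "unitary_rep Lam LamF V \<rho> B \<longleftrightarrow>
     (\<forall>u\<in>V. \<forall>u'\<in>V. \<forall>w\<in>V. \<forall>a b. B (fsc a u + fsc b u') w = a * B u w + b * B u' w) \<and>
     (\<forall>u\<in>V. \<forall>w\<in>V. B u w = cnj (B w u)) \<and>
     (\<forall>u\<in>V. u \<noteq> 0 \<longrightarrow> Re (B u u) > 0) \<and>
     (\<forall>g. valid_gen Lam LamF g \<longrightarrow> (\<forall>u\<in>V. \<forall>w\<in>V.
        B (\<rho> (op_of Lam LamF g) u) w = B u (\<rho> (op_of Lam LamF (omega_gen g)) w)))"

end

theory Submission
  imports Defs
begin

text \<open>If Y = \<omega>(Z) lowers the weight and [Y, Z] = A - C with A, C in G00, then for the
  lowest weight vector v we get Y Z v = [Y, Z] v + Z Y v = (h A - h C) v, so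
  0 \<le> \<langle>Z v, Z v\<rangle> = \<langle>v, Y Z v\<rangle> = (h A - h C) \<langle>v, v\<rangle> with \<langle>v, v\<rangle> > 0.
  For the second kind take Z = Xibar^\<lambda>1_\<lambda>2 (x) l^I_J. These operators compose like matrix
  units, (Xibar^\<lambda>2_\<lambda>1 (x) l^J_I)(Xibar^\<lambda>1_\<lambda>2 (x) l^I_J) = Xibar^\<lambda>2_\<lambda>2 (x) l^J_J, so [\<omega>(Z), Z]
  is the difference of the two Cartan elements in question, and \<omega>(Z) lies in G^- because
  I\<lambda>1 > J\<lambda>2. The third kind is symmetric.\<close>

lemma ospan_superset: "X \<in> Gs \<Longrightarrow> X \<in> ospan Gs"
  unfolding ospan_def
  by (rule CollectI, rule exI[of _ "{X}"], rule exI[of _ "\<lambda>_. 1"]) (simp add: osc_def)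

lemma ospan_mono: "Gs \<subseteq> Hs \<Longrightarrow> ospan Gs \<subseteq> ospan Hs"
  unfolding ospan_def by blast

lemma G00_subset_Ghat: "G00 Lam LamF \<subseteq> Ghat Lam LamF"
  unfolding G00_def Ghat_def by (rule ospan_mono) blast

lemma op_of_in_Ghat: "valid_gen Lam LamF g \<Longrightarrow> op_of Lam LamF g \<in> Ghat Lam LamF"
  unfolding Ghat_def by (rule ospan_superset) blast

lemma op_of_in_G00:
  "valid_gen Lam LamF g \<Longrightarrow> is_G00_gen g \<Longrightarrow> op_of Lam LamF g \<in> G00 Lam LamF"
  unfolding G00_def by (rule ospan_superset) blast

lemma op_of_in_Gminus:
  "valid_gen Lam LamF g \<Longrightarrow> is_Gminus_gen g \<Longrightarrow> op_of Lam LamF g \<in> Gminus Lam LamF"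
  unfolding Gminus_def by (rule ospan_superset) blast

lemma valid_gen_omega_gen: "valid_gen Lam LamF (omega_gen g) \<longleftrightarrow> valid_gen Lam LamF g"
  by (cases g) auto

lemma apply_op_ebas: "apply_op P (ebas b) = P b"
proof -
  have "{c. ebas b c \<noteq> 0} = {b}" by (auto simp: ebas_def)
  then show ?thesis unfolding apply_op_def by (simp add: ebas_def)
qed

lemma apply_op_zero: "apply_op P 0 = 0"
  unfolding apply_op_def by simp

lemma gen_act_raw_L:
  "gen_act_raw (L p q P Q) (a, K, e) =
     (if a = q \<and> take (length Q) K = Q then ebas (p, P @ drop (length Q) K, e) else 0)"
proof -
  have "(\<Sum>n\<in>{0..length K}. if take n K = Q then ebas (p, P @ drop n K, e) else 0) =
        (\<Sum>n\<in>{0..length K}. if n = length Q \<and> take (length Q) K = Q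
                              then ebas (p, P @ drop (length Q) K, e) else 0)"
    by (rule sum.cong) auto
  moreover have "take (length Q) K = Q \<Longrightarrow> length Q \<le> length K"
    by (auto dest: arg_cong[where f = length])
  ultimately show ?thesis by (auto simp del: sum.cl_ivl_Suc)
qed

lemma gen_act_raw_R:
  "gen_act_raw (R P Q p q) (a, K, e) =
     (if e = q \<and> drop (length K - length Q) K = Q
      then ebas (a, take (length K - length Q) K @ P, p) else 0)"
proof -
  have "(\<Sum>n\<in>{0..length K}. if drop n K = Q then ebas (a, take n K @ P, p) else 0) =
        (\<Sum>n\<in>{0..length K}. if n = length K - length Q \<and> drop (length K - length Q) K = Q
                              then ebas (a, take (length K - length Q) K @ P, p) else 0)"
    by (rule sum.cong) auto
  then show ?thesis by (auto simp del: sum.cl_ivl_Suc)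
qed

lemma valid_seq_append: "valid_seq Lam (P @ Q) \<longleftrightarrow> valid_seq Lam P \<and> valid_seq Lam Q"
  by (auto simp: valid_seq_def)

lemma valid_seq_take: "valid_seq Lam K \<Longrightarrow> valid_seq Lam (take n K)"
  by (auto simp: valid_seq_def dest: in_set_takeD)

lemma valid_seq_drop: "valid_seq Lam K \<Longrightarrow> valid_seq Lam (drop n K)"
  by (auto simp: valid_seq_def dest: in_set_dropD)

lemma comp_op_L_L:
  assumes "valid_lam LamF q" "valid_seq Lam Q"
  shows "comp_op (op_of Lam LamF (L p q P Q)) (op_of Lam LamF (L q r Q N)) =
         op_of Lam LamF (L p r P N)"
proof (intro ext)
  fix x :: bas and y
  obtain a K e where x: "x = (a, K, e)" by (cases x)
  show "comp_op (op_of Lam LamF (L p q P Q)) (op_of Lam LamF (L q r Q N)) x y =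
        op_of Lam LamF (L p r P N) x y"
  proof (cases "valid_bas Lam LamF x \<and> a = r \<and> take (length N) K = N")
    case True
    then have "valid_bas Lam LamF (q, Q @ drop (length N) K, e)"
      using assms by (auto simp: x valid_bas_def valid_seq_append valid_seq_drop)
    with True show ?thesis
      by (simp add: x comp_op_def op_of_def gen_act_raw_L apply_op_ebas apply_op_zero
          del: gen_act_raw.simps)
  next
    case False
    then show ?thesis
      by (auto simp: x comp_op_def op_of_def gen_act_raw_L apply_op_zero simp del: gen_act_raw.simps)
  qed
qed

lemma comp_op_R_R:
  assumes "valid_lam LamF q" "valid_seq Lam Q"
  shows "comp_op (op_of Lam LamF (R P Q p q)) (op_of Lam LamF (R Q N q s)) =
         op_of Lam LamF (R P N p s)"
proof (intro ext)
  fix x :: bas and y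
  obtain a K e where x: "x = (a, K, e)" by (cases x)
  define T where "T = take (length K - length N) K"
  show "comp_op (op_of Lam LamF (R P Q p q)) (op_of Lam LamF (R Q N q s)) x y =
        op_of Lam LamF (R P N p s) x y"
  proof (cases "valid_bas Lam LamF x \<and> e = s \<and> drop (length K - length N) K = N")
    case True
    then have "valid_bas Lam LamF (a, T @ Q, q)"
      using assms by (auto simp: x T_def valid_bas_def valid_seq_append valid_seq_take)
    with True show ?thesis
      by (simp add: x T_def comp_op_def op_of_def gen_act_raw_R apply_op_ebas apply_op_zero
          del: gen_act_raw.simps)
  next
    case False
    then show ?thesis
      by (auto simp: x comp_op_def op_of_def gen_act_raw_R apply_op_zero simp del: gen_act_raw.simps)
  qed
qed

lemma bracket_L_adjoint:
  assumes "valid_seq Lam I" "valid_seq Lam J" "valid_lam LamF l1" "valid_lam LamF l2"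
  shows "bracket (op_of Lam LamF (L l2 l1 J I)) (op_of Lam LamF (L l1 l2 I J)) =
         op_of Lam LamF (L l2 l2 J J) - op_of Lam LamF (L l1 l1 I I)"
  using assms by (simp add: bracket_def comp_op_L_L)

lemma bracket_R_adjoint:
  assumes "valid_seq Lam I" "valid_seq Lam J" "valid_lam LamF l1" "valid_lam LamF l2"
  shows "bracket (op_of Lam LamF (R J I l2 l1)) (op_of Lam LamF (R I J l1 l2)) =
         op_of Lam LamF (R J J l2 l2) - op_of Lam LamF (R I I l1 l1)"
  using assms by (simp add: bracket_def comp_op_R_R)

lemma seq_gt_length_le: "seq_gt P Q \<Longrightarrow> length Q \<le> length P"
  unfolding seq_gt_def by auto

lemma fsc_zero [simp]: "fsc 0 u = 0"
  by (simp add: fsc_def fun_eq_iff)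

lemma fsc_one_minus_one: "fsc 1 u + fsc (-1) w = u - w"
  by (simp add: fsc_def fun_eq_iff)

lemma osc_one_minus_one: "osc 1 X + osc (-1) Y = X - Y"
  by (simp add: osc_def fun_eq_iff)

lemma
  assumes "csubspace W"
  shows csubspace_zero: "0 \<in> W"
    and csubspace_fsc: "u \<in> W \<Longrightarrow> fsc c u \<in> W"
  using assms unfolding csubspace_def by blast+

lemma
  assumes "is_rep Lam LamF V \<rho>"
  shows is_rep_csubspace: "csubspace V"
    and is_rep_closed: "X \<in> Ghat Lam LamF \<Longrightarrow> u \<in> V \<Longrightarrow> \<rho> X u \<in> V"
    and is_rep_linear: "X \<in> Ghat Lam LamF \<Longrightarrow> u \<in> V \<Longrightarrow> w \<in> V \<Longrightarrow>
          \<rho> X (fsc a u + fsc b w) = fsc a (\<rho> X u) + fsc b (\<rho> X w)"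
    and is_rep_linear_op: "X \<in> Ghat Lam LamF \<Longrightarrow> Y \<in> Ghat Lam LamF \<Longrightarrow> u \<in> V \<Longrightarrow>
          \<rho> (osc a X + osc b Y) u = fsc a (\<rho> X u) + fsc b (\<rho> Y u)"
    and is_rep_bracket: "X \<in> Ghat Lam LamF \<Longrightarrow> Y \<in> Ghat Lam LamF \<Longrightarrow> u \<in> V \<Longrightarrow>
          \<rho> (bracket X Y) u = \<rho> X (\<rho> Y u) - \<rho> Y (\<rho> X u)"
  using assms unfolding is_rep_def by blast+

lemma is_rep_zero:
  assumes "is_rep Lam LamF V \<rho>" "X \<in> Ghat Lam LamF"
  shows "\<rho> X 0 = 0"
proof -
  have "0 \<in> V" using csubspace_zero[OF is_rep_csubspace[OF assms(1)]] .
  then have "\<rho> X (fsc 0 0 + fsc 0 0) = fsc 0 (\<rho> X 0) + fsc 0 (\<rho> X 0)"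
    using is_rep_linear[OF assms] by blast
  then show ?thesis by simp
qed

lemma is_rep_diff:
  assumes "is_rep Lam LamF V \<rho>" "X \<in> Ghat Lam LamF" "Y \<in> Ghat Lam LamF" "u \<in> V"
  shows "\<rho> (X - Y) u = \<rho> X u - \<rho> Y u"
  using is_rep_linear_op[OF assms, of 1 "-1"] by (simp add: osc_one_minus_one fsc_one_minus_one)

lemma
  assumes "lowest_weight_rep Lam LamF V \<rho> h v"
  shows lowest_weight_rep_vector: "v \<in> V" "v \<noteq> 0"
    and lowest_weight_rep_lowering: "X \<in> Gminus Lam LamF \<Longrightarrow> \<rho> X v = 0"
    and lowest_weight_rep_weight: "H \<in> G00 Lam LamF \<Longrightarrow> \<rho> H v = fsc (h H) v"
  using assms unfolding lowest_weight_rep_def by blast+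

lemma lowest_weight_bracket_action:
  assumes rep: "is_rep Lam LamF V \<rho>"
    and lw: "lowest_weight_rep Lam LamF V \<rho> h v"
    and Y: "Y \<in> Gminus Lam LamF" "Y \<in> Ghat Lam LamF" and Z: "Z \<in> Ghat Lam LamF"
    and A: "A \<in> G00 Lam LamF" and C: "C \<in> G00 Lam LamF"
    and br: "bracket Y Z = A - C"
  shows "\<rho> Y (\<rho> Z v) = fsc (h A - h C) v"
proof -
  note v = lowest_weight_rep_vector(1)[OF lw]
  have "\<rho> Y (\<rho> Z v) = \<rho> (bracket Y Z) v + \<rho> Z (\<rho> Y v)"
    using is_rep_bracket[OF rep Y(2) Z v] by simp
  also have "\<dots> = \<rho> (A - C) v"
    by (simp add: br lowest_weight_rep_lowering[OF lw Y(1)] is_rep_zero[OF rep Z])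
  also have "\<dots> = \<rho> A v - \<rho> C v"
    using is_rep_diff[OF rep _ _ v] A C G00_subset_Ghat by blast
  also have "\<dots> = fsc (h A - h C) v"
    by (simp add: lowest_weight_rep_weight[OF lw] A C fsc_def fun_eq_iff left_diff_distrib)
  finally show ?thesis .
qed

lemma
  assumes "unitary_rep Lam LamF V \<rho> B"
  shows unitary_rep_linear: "u \<in> V \<Longrightarrow> u' \<in> V \<Longrightarrow> w \<in> V \<Longrightarrow>
          B (fsc a u + fsc b u') w = a * B u w + b * B u' w"
    and unitary_rep_hermitian: "u \<in> V \<Longrightarrow> w \<in> V \<Longrightarrow> B u w = cnj (B w u)"
    and unitary_rep_positive: "u \<in> V \<Longrightarrow> u \<noteq> 0 \<Longrightarrow> 0 < Re (B u u)"
    and unitary_rep_contravariant: "valid_gen Lam LamF g \<Longrightarrow> u \<in> V \<Longrightarrow> w \<in> V \<Longrightarrow>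
          B (\<rho> (op_of Lam LamF g) u) w = B u (\<rho> (op_of Lam LamF (omega_gen g)) w)"
  using assms unfolding unitary_rep_def by blast+

lemma unitary_rep_fsc_right:
  assumes un: "unitary_rep Lam LamF V \<rho> B" and V: "csubspace V" and "u \<in> V" "w \<in> V"
  shows "B u (fsc c w) = cnj c * B u w"
proof -
  have cw: "fsc c w \<in> V" using csubspace_fsc[OF V \<open>w \<in> V\<close>] .
  have "B (fsc c w) u = c * B w u"
    using unitary_rep_linear[OF un \<open>w \<in> V\<close> \<open>w \<in> V\<close> \<open>u \<in> V\<close>, of c 0] by simp
  then show ?thesis
    using unitary_rep_hermitian[OF un \<open>u \<in> V\<close> cw] unitary_rep_hermitian[OF un \<open>u \<in> V\<close> \<open>w \<in> V\<close>]
    by simp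
qed

lemma unitary_rep_self_real:
  assumes "unitary_rep Lam LamF V \<rho> B" "u \<in> V"
  shows "Im (B u u) = 0"
  using unitary_rep_hermitian[OF assms assms(2)] by (metis cnj.sel(2) neg_equal_zero)

lemma unitary_rep_self_nonneg:
  assumes un: "unitary_rep Lam LamF V \<rho> B" and V: "csubspace V" and "u \<in> V"
  shows "0 \<le> Re (B u u)"
proof (cases "u = 0")
  case True
  have "B (fsc 0 0 + fsc 0 0) 0 = 0 * B 0 0 + 0 * B 0 0"
    using unitary_rep_linear[OF un] csubspace_zero[OF V] by blast
  then show ?thesis using True by simp
next
  case False
  then show ?thesis using unitary_rep_positive[OF un \<open>u \<in> V\<close>] by simp
qed

lemma lowest_weight_omega_bracket_nonneg:
  assumes rep: "is_rep Lam LamF V \<rho>"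
    and lw: "lowest_weight_rep Lam LamF V \<rho> h v"
    and un: "unitary_rep Lam LamF V \<rho> B"
    and g: "valid_gen Lam LamF g" and lowering: "is_Gminus_gen (omega_gen g)"
    and A: "A \<in> G00 Lam LamF" and C: "C \<in> G00 Lam LamF"
    and br: "bracket (op_of Lam LamF (omega_gen g)) (op_of Lam LamF g) = A - C"
  shows "Re (h C) \<le> Re (h A)"
proof -
  define Y Z where "Y = op_of Lam LamF (omega_gen g)" and "Z = op_of Lam LamF g"
  define w where "w = \<rho> Z v"
  note V = is_rep_csubspace[OF rep] and v = lowest_weight_rep_vector[OF lw]
  have Z: "Z \<in> Ghat Lam LamF" using g by (simp add: Z_def op_of_in_Ghat)
  have Y: "Y \<in> Gminus Lam LamF" "Y \<in> Ghat Lam LamF"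
    using g lowering by (simp_all add: Y_def op_of_in_Gminus op_of_in_Ghat valid_gen_omega_gen)
  have w: "w \<in> V" using is_rep_closed[OF rep Z v(1)] by (simp add: w_def)
  have "B w w = B v (\<rho> Y w)"
    using unitary_rep_contravariant[OF un g v(1) w] by (simp add: w_def Y_def Z_def)
  also have "\<dots> = cnj (h A - h C) * B v v"
    using lowest_weight_bracket_action[OF rep lw Y Z A C] br
      unitary_rep_fsc_right[OF un V v(1) v(1)]
    by (simp add: w_def Y_def Z_def)
  finally have "Re (B w w) = Re (h A - h C) * Re (B v v)"
    using unitary_rep_self_real[OF un v(1)] by simp
  moreover have "0 \<le> Re (B w w)" using unitary_rep_self_nonneg[OF un V w] .
  moreover have "0 < Re (B v v)" using unitary_rep_positive[OF un v] .
  ultimately show ?thesis by (simp add: zero_le_mult_iff)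
qed

theorem lemma17:
  fixes Lam LamF :: nat
    and V :: "('a \<Rightarrow> complex) set"
    and \<rho> :: "op \<Rightarrow> ('a \<Rightarrow> complex) \<Rightarrow> ('a \<Rightarrow> complex)"
    and B :: "('a \<Rightarrow> complex) \<Rightarrow> ('a \<Rightarrow> complex) \<Rightarrow> complex"
    and h :: "op \<Rightarrow> complex"
    and v :: "'a \<Rightarrow> complex"
    and I J :: "nat list" and l1 l2 :: nat
  assumes "Lam > 0" and "LamF > 0"
    and "irreducible_rep Lam LamF V \<rho>"
    and "lowest_weight_rep Lam LamF V \<rho> h v"
    and "unitary_rep Lam LamF V \<rho> B"
    and "valid_seq Lam I" and "valid_seq Lam J"
    and "valid_lam LamF l1" and "valid_lam LamF l2"
    and "seq_gt (I @ [l1]) (J @ [l2])"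
  shows "Re (h (op_of Lam LamF (L l2 l2 J J))) - Re (h (op_of Lam LamF (L l1 l1 I I))) \<ge> 0
     \<and> Re (h (op_of Lam LamF (R J J l2 l2))) - Re (h (op_of Lam LamF (R I I l1 l1))) \<ge> 0"
proof -
  have rep: "is_rep Lam LamF V \<rho>" using assms(3) by (simp add: irreducible_rep_def)
  note weight_rep = rep assms(4,5) and valid = assms(6-9) and gt = assms(10)
  have "length J \<le> length I" using seq_gt_length_le[OF gt] by simp
  have "Re (h (op_of Lam LamF (L l1 l1 I I))) \<le> Re (h (op_of Lam LamF (L l2 l2 J J)))"
    by (rule lowest_weight_omega_bracket_nonneg[OF weight_rep, where g = "L l1 l2 I J"])
      (use \<open>length J \<le> length I\<close> in \<open>auto simp: valid gt op_of_in_G00 bracket_L_adjoint\<close>)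
  moreover have "Re (h (op_of Lam LamF (R I I l1 l1))) \<le> Re (h (op_of Lam LamF (R J J l2 l2)))"
    by (rule lowest_weight_omega_bracket_nonneg[OF weight_rep, where g = "R I J l1 l2"])
      (use \<open>length J \<le> length I\<close> in \<open>auto simp: valid gt op_of_in_G00 bracket_R_adjoint\<close>)
  ultimately show ?thesis by simp
qed

end
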